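(* Let the InGVIO state be $\chi=(\mathbf R_i^w,{}^w\mathbf p_i,{}^w\mathbf v_i,\mathbf b_g,\mathbf b_a,\mathbf R_c^i,{}^i\mathbf p_c,\mathbf R_{c_m}^w,{}^w\mathbf p_{c_m},{}^w\mathbf p_{f_j},t_\alpha,f)$ with error defined through the map $\boxplus$: $$\hat\chi\boxplus(\delta\boldsymbol\theta_i^w,\delta{}^w\mathbf p_i,\delta{}^w\mathbf v_i,\delta\mathbf b_g,\delta\mathbf b_a,\delta\boldsymbol\theta_c^i,\delta{}^i\mathbf p_c,\delta\boldsymbol\theta_{c_m}^w,\delta{}^w\mathbf p_{c_m},\delta{}^w\mathbf p_{f_j},\delta t_\alpha,\delta f)$$ $$=\big(\Gamma_0(\delta\boldsymbol\theta_i^w)\hat{\mathbf R}_i^w,\ \Gamma_0(\delta\boldsymbol\theta_i^w){}^w\hat{\mathbf p}_i+\Gamma_1(\delta\boldsymbol\theta_i^w)\delta{}^w\mathbf p_i,\ \Gamma_0(\delta\boldsymbol\theta_i^w){}^w\hat{\mathbf v}_i+\Gamma_1(\delta\boldsymbol\theta_i^w)\delta{}^w\mathbf v_i,\ \hat{\mathbf b}_g+\delta\mathbf b_g,\ \hat{\mathbf b}_a+\delta\mathbf b_a,$$ $$\Gamma_0(\delta\boldsymbol\theta_c^i)\hat{\mathbf R}_c^i,\ \Gamma_0(\delta\boldsymbol\theta_c^i){}^i\hat{\mathbf p}_c+\Gamma_1(\delta\boldsymbol\theta_c^i)\delta{}^i\mathbf p_c,\ \Gamma_0(\delta\boldsymbol\theta_{c_m}^w)\hat{\mathbf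 R}_{c_m}^w,\ \Gamma_0(\delta\boldsymbol\theta_{c_m}^w){}^w\hat{\mathbf p}_{c_m}+\Gamma_1(\delta\boldsymbol\theta_{c_m}^w)\delta{}^w\mathbf p_{c_m},$$ $$\Gamma_0(\delta\boldsymbol\theta_{c_m}^w){}^w\hat{\mathbf p}_{f_j}+\Gamma_1(\delta\boldsymbol\theta_{c_m}^w)\delta{}^w\mathbf p_{f_j},\ \hat t_\alpha+\delta t_\alpha,\ \hat f+\delta f\big),$$ (each landmark being anchored to the rotation of one cloned pose $c_m$), and let $\boxminus$ be the corresponding inverse map, $\delta\chi=\chi\boxminus\hat\chi$. Then this error $\boxminus$ is compatible with the group $H$ for each of the possible infinitesimal symmetry groups $H=\mathbb{SO}_g(2)\ltimes\operatorname{null}(\mathbf N_g)$ and $H=\operatorname{null}(\mathbf N_g)$ of the GVIO system, i.e. $\frac{\partial}{\partial h}\big((h\rhd\chi)\boxminus\chi\big)\big|_{h=\mathrm{id}_H}$ does not depend on $\chi$.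
   Context: $\Gamma$-functions: for $m\ge0$, $\Gamma_m(\boldsymbol\theta)=\sum_{n\ge0}\frac{(\boldsymbol\theta^\times)^n}{(m+n)!}$, where $\boldsymbol\theta^\times$ is the skew-symmetric matrix of $\boldsymbol\theta\in\mathbb R^3$; so $\Gamma_0=\exp(\cdot^\times)$. Components: IMU rotation, position, velocity in world frame; gyroscope/accelerometer biases; camera–IMU extrinsics $(\mathbf R_c^i,{}^i\mathbf p_c)$; cloned camera poses $(\mathbf R_{c_m}^w,{}^w\mathbf p_{c_m})$; landmark positions ${}^w\mathbf p_{f_j}$; GNSS clock bias $t_\alpha$ and clock drift $f$. ${}^w\mathbf g$ is gravity; $\mathbb{SO}_g(2)$ is the group of rotations about ${}^w\mathbf g$; $\mathbf N_g$ is the matrix with rows $(\mathbf n_j-\mathbf n_{j-1})^T\mathbf R_w^{\mathrm{ECEF}}$, $j=2,\dots,N$, with $\mathbf n_j$ the unit vector from the receiver to satellite $j$ and $\mathbf R_w^{\mathrm{ECEF}}$ a fixed rotation; $\operatorname{null}(\mathbf N_g)\subseteq\mathbb R^3$ is viewed as a group of translations. An element $(\mathbf R_S,\mathbf p_S)$ of $H\subseteq\mathbb{SO}_g(2)\ltimes\mathbb R^3\subset\mathbb{SE}(3)$ acts by $\mathbf R_i^w\mapsto\mathbf R_S^{-1}\mathbf R_i^w$, ${}^w\mathbf p_i\mapsto\mathbf R_S^{-1}({}^w\mathbf p_i-\mathbf p_S)$, ${}^w\mathbf v_i\mapsto\mathbf R_S^{-1}{}^w\mathbf v_i$, $\mathbf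 R_{c_m}^w\mapsto\mathbf R_S^{-1}\mathbf R_{c_m}^w$, ${}^w\mathbf p_{c_m}\mapsto\mathbf R_S^{-1}({}^w\mathbf p_{c_m}-\mathbf p_S)$, ${}^w\mathbf p_{f_j}\mapsto\mathbf R_S^{-1}({}^w\mathbf p_{f_j}-\mathbf p_S)$, leaving biases, extrinsics and clock states unchanged. Definition: an error $\boxminus$ is compatible with a group $H$ acting on the state if $\frac{\partial}{\partial h}((h\rhd\chi)\boxminus\chi)|_{h=\mathrm{id}_H}$ does not depend on $\chi$. *)

theory Defs
  imports "HOL-Analysis.Analysis"
begin

definition skew :: "real^3 \<Rightarrow> real^3^3" where
  "skew \<theta> = vector [vector [0, - \<theta>$3, \<theta>$2],
                     vector [\<theta>$3, 0, - \<theta>$1],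
                     vector [- \<theta>$2, \<theta>$1, 0]]"

primrec mpow :: "real^3^3 \<Rightarrow> nat \<Rightarrow> real^3^3" where
  "mpow A 0 = mat 1"
| "mpow A (Suc n) = A ** mpow A n"

definition Gamma :: "nat \<Rightarrow> real^3 \<Rightarrow> real^3^3" where
  "Gamma m \<theta> = (\<Sum>n. (1 / fact (m + n)) *\<^sub>R mpow (skew \<theta>) n)"

definition is_rot :: "real^3^3 \<Rightarrow> bool" where
  "is_rot R \<longleftrightarrow> transpose R ** R = mat 1 \<and> det R = 1"

(* InGVIO state: 'm indexes cloned camera poses, 'f indexes landmarks *)
record ('m::finite, 'f::finite) ingvio_state =
  Ri  :: "real^3^3"
  p_i :: "real^3"
  vi  :: "real^3"
  bg  :: "real^3"
  ba  :: "real^3"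
  Rc  :: "real^3^3"
  pc  :: "real^3"
  Rcm :: "(real^3^3)^'m"
  pcm :: "(real^3)^'m"
  pf  :: "(real^3)^'f"
  talpha :: real             (* clock bias *)
  fdrift :: real             (* clock drift *)

(* error vector (a real normed vector space):
   (dtheta_i, dp_i, dv_i, dbg, dba, dtheta_c, dp_c, dtheta_cm, dp_cm, dp_f, dt_alpha, df) *)
type_synonym ('m, 'f) ingvio_err =
  "(real^3) \<times> (real^3) \<times> (real^3) \<times> (real^3) \<times> (real^3) \<times> (real^3) \<times> (real^3) \<times>
   ((real^3)^'m) \<times> ((real^3)^'m) \<times> ((real^3)^'f) \<times> real \<times> real"

definition valid_state :: "('m::finite, 'f::finite) ingvio_state \<Rightarrow> bool" where
  "valid_state x \<longleftrightarrow> is_rot (Ri x) \<and> is_rot (Rc x) \<and> (\<forall>m. is_rot (Rcm x $ m))"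

(* the boxplus map; anchor j = index of the cloned pose to which landmark j is anchored *)
definition boxplus ::
  "('f \<Rightarrow> 'm) \<Rightarrow> ('m::finite, 'f::finite) ingvio_state \<Rightarrow> ('m, 'f) ingvio_err \<Rightarrow> ('m, 'f) ingvio_state" where
  "boxplus anchor x d = (case d of
     (dthi, dpi, dvi, dbg, dba, dthc, dpc, dthcm, dpcm, dpf, dta, df) \<Rightarrow>
     \<lparr> Ri = Gamma 0 dthi ** Ri x,
       p_i = Gamma 0 dthi *v p_i x + Gamma 1 dthi *v dpi,
       vi = Gamma 0 dthi *v vi x + Gamma 1 dthi *v dvi,
       bg = bg x + dbg,
       ba = ba x + dba,
       Rc = Gamma 0 dthc ** Rc x,
       pc = Gamma 0 dthc *v pc x + Gamma 1 dthc *v dpc,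
       Rcm = (\<chi> m. Gamma 0 (dthcm $ m) ** (Rcm x $ m)),
       pcm = (\<chi> m. Gamma 0 (dthcm $ m) *v (pcm x $ m) + Gamma 1 (dthcm $ m) *v (dpcm $ m)),
       pf = (\<chi> j. Gamma 0 (dthcm $ anchor j) *v (pf x $ j) + Gamma 1 (dthcm $ anchor j) *v (dpf $ j)),
       talpha = talpha x + dta,
       fdrift = fdrift x + df \<rparr>)"

definition nullNg :: "(nat \<Rightarrow> real^3) \<Rightarrow> nat \<Rightarrow> real^3^3 \<Rightarrow> (real^3) set" where
  "nullNg n N Recef = {v. \<forall>j\<in>{2..N}. (n j - n (j - 1)) \<bullet> (Recef *v v) = 0}"

(* element of SO_g(2) x| R^3 parametrised by rotation angle a about g and translation pS;
   R_S = Gamma_0(a * g/|g|) *)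
definition rotS :: "real^3 \<Rightarrow> real \<Rightarrow> real^3^3" where
  "rotS g a = Gamma 0 (a *\<^sub>R ((1 / norm g) *\<^sub>R g))"

definition act ::
  "real^3 \<Rightarrow> real \<times> (real^3) \<Rightarrow> ('m::finite, 'f::finite) ingvio_state \<Rightarrow> ('m, 'f) ingvio_state" where
  "act g h x = (case h of (a, pS) \<Rightarrow>
     (let RSi = matrix_inv (rotS g a) in
      x \<lparr> Ri := RSi ** Ri x,
          p_i := RSi *v (p_i x - pS),
          vi := RSi *v vi x,
          Rcm := (\<chi> m. RSi ** (Rcm x $ m)),
          pcm := (\<chi> m. RSi *v (pcm x $ m - pS)),
          pf := (\<chi> j. RSi *v (pf x $ j - pS)) \<rparr>))"

end

theory Submission
  imports Defs
begin

(* Near the identity, the action of h = (a, p_S) is itself a boxplus-perturbation of the state by an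
   error that does not depend on the state: R_S^-1 = Gamma_0(-a g/|g|) rotates every orientation as
   boxplus does with theta = -a g/|g|, and the translation -R_S^-1 p_S is produced by the Gamma_1 terms
   with dp = -Gamma_1(theta)^-1 Gamma_0(theta) p_S, as long as Gamma_1(theta) is invertible.  Since
   boxminus inverts boxplus near zero, (h |> x) boxminus x equals this error near the identity, so its
   derivative there does not depend on x.  Invertibility and continuity of Gamma_1 along the axis come
   from the closed form of Gamma_m(b u) in the algebra spanned by I, K, K^2 for K = u^x, which is closed
   under products because K^3 = -K. *)

lemma matrix_add_rdistrib: "(A + B) ** C = A ** C + B ** (C :: 'a::semiring_1^'p^'n)"
  by (vector matrix_matrix_mult_def sum.distrib[symmetric] field_simps)

lemma matrix_mul_neg_right: "(A :: real^'n^'m) ** (- B) = - (A ** B)"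
  by (metis matrix_scalar_ac scalar_matrix_assoc scaleR_minus1_left matrix_mul_rid)

lemma matrix_inv_unique:
  fixes A :: "'a::semiring_1^'n^'m"
  assumes "A ** B = mat 1" "B ** A = mat 1"
  shows "matrix_inv A = B"
proof -
  have "A ** matrix_inv A = mat 1 \<and> matrix_inv A ** A = mat 1"
    unfolding matrix_inv_def using someI[of "\<lambda>A'. A ** A' = mat 1 \<and> A' ** A = mat 1" B] assms
    by blast
  then show ?thesis
    by (metis assms(2) matrix_mul_assoc matrix_mul_lid matrix_mul_rid)
qed

lemma bounded_bilinear_matrix_vector_mult:
  "bounded_bilinear ((*v) :: real^'n^'m \<Rightarrow> real^'n \<Rightarrow> real^'m)"
  unfolding bilinear_conv_bounded_bilinear[symmetric] bilinear_def linear_iff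
  by (simp add: matrix_vector_right_distrib matrix_vector_mult_add_rdistrib
      matrix_vector_mult_scaleR flip: scaleR_matrix_vector_assoc)

lemma bounded_bilinear_matrix_matrix_mult:
  "bounded_bilinear ((**) :: real^'n^'m \<Rightarrow> real^'p^'n \<Rightarrow> real^'p^'m)"
  unfolding bilinear_conv_bounded_bilinear[symmetric] bilinear_def linear_iff
  by (simp add: matrix_add_ldistrib matrix_add_rdistrib matrix_scalar_ac scalar_matrix_assoc)

lemma bounded_linear_vec: "bounded_linear (vec :: 'a::euclidean_space \<Rightarrow> 'a^'n)"
  by (simp add: linear_conv_bounded_linear[symmetric])

lemma (in bounded_bilinear) has_derivative_isCont_left_factor:
  fixes E :: "'d::real_normed_vector \<Rightarrow> 'a"
  assumes "isCont E c"
  shows "((\<lambda>h. prod (E (fst h)) (snd h)) has_derivative (\<lambda>h. prod (E c) (snd h))) (at (c, 0))"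
proof -
  obtain K where "K > 0" and K: "\<And>a b. norm (prod a b) \<le> norm a * norm b * K"
    using pos_bounded by blast
  have "((\<lambda>h. fst h) \<longlongrightarrow> c) (at (c, 0))"
    using tendsto_fst[OF tendsto_ident_at[of "(c, 0)"]] by simp
  then have "((\<lambda>h. norm (E (fst h) - E c) * K) \<longlongrightarrow> norm (E c - E c) * K) (at (c, 0))"
    by (intro tendsto_intros isCont_tendsto_compose[OF assms])
  then have lim: "((\<lambda>h. norm (E (fst h) - E c) * K) \<longlongrightarrow> 0) (at (c, 0))"
    by simp
  have bound: "norm (prod (E (fst h)) (snd h) - prod (E c) (snd h)) / norm (h - (c, 0))
      \<le> norm (E (fst h) - E c) * K" for h :: "'d \<times> 'b"
  proof -
    have "norm (snd h) \<le> norm (h - (c, 0))"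
      by (cases h) (simp add: norm_snd_le)
    then have "norm (prod (E (fst h) - E c) (snd h)) \<le> norm (E (fst h) - E c) * norm (h - (c, 0)) * K"
      by (meson K \<open>K > 0\<close> mult_left_mono mult_right_mono norm_ge_zero order_trans less_imp_le)
    then show ?thesis
      by (cases "h = (c, 0)") (simp_all add: divide_le_eq diff_left mult_ac)
  qed
  show ?thesis
    unfolding has_derivative_iff_norm
  proof (intro conjI)
    show "bounded_linear (\<lambda>h. prod (E c) (snd h))"
      by (intro bounded_linear_compose[OF bounded_linear_right] bounded_linear_snd)
  qed (rule Lim_null_comparison[OF _ lim], simp add: zero_right bound always_eventually)
qed

lemma has_derivative_through_local_inverse:
  fixes d :: "'a::real_normed_vector \<Rightarrow> 'b::real_normed_vector"
  assumes inverse: "\<And>\<delta>. norm \<delta> < e \<Longrightarrow> minus_map (plus_map \<delta>) = \<delta>" and "0 < e"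
    and d: "(d has_derivative D) (at z)" "d z = 0"
    and action: "\<forall>\<^sub>F h in nhds z. action h = plus_map (d h)"
  shows "((\<lambda>h. minus_map (action h)) has_derivative D) (at z)"
proof (rule has_derivative_transform_eventually[OF d(1)])
  have "((\<lambda>h. norm (d h)) \<longlongrightarrow> 0) (at z)"
    using isContD[OF has_derivative_continuous[OF d(1)]] tendsto_norm d(2) by fastforce
  then have "\<forall>\<^sub>F h in at z. norm (d h) < e"
    using \<open>0 < e\<close> by (rule order_tendstoD)
  moreover have "\<forall>\<^sub>F h in at z. action h = plus_map (d h)"
    using action by (simp add: eventually_nhds_conv_at)
  ultimately show "\<forall>\<^sub>F h in at z. d h = minus_map (action h)"
    by eventually_elim (simp add: inverse)
  show "d z = minus_map (action z)"
    using eventually_nhds_x_imp_x[OF action] inverse[of 0] \<open>0 < e\<close> d(2) by simp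
qed simp

definition skew_poly :: "real^'n^'n \<Rightarrow> real \<Rightarrow> real \<Rightarrow> real \<Rightarrow> real^'n^'n" where
  "skew_poly K p0 p1 p2 = p0 *\<^sub>R mat 1 + p1 *\<^sub>R K + p2 *\<^sub>R (K ** K)"

lemma skew_poly_mult:
  assumes K3: "K ** (K ** K) = - K"
  shows "skew_poly K p0 p1 p2 ** skew_poly K q0 q1 q2 =
    skew_poly K (p0 * q0) (p0 * q1 + p1 * q0 - p1 * q2 - p2 * q1) (p0 * q2 + p2 * q0 + p1 * q1 - p2 * q2)"
proof -
  have K3': "(K ** K) ** K = - K"
    using K3 by (simp add: matrix_mul_assoc)
  have K4: "(K ** K) ** (K ** K) = - (K ** K)"
    by (metis K3' matrix_mul_assoc matrix_mul_neg_right matrix_mul_rid)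
  show ?thesis
    unfolding skew_poly_def
    by (simp add: matrix_add_ldistrib matrix_add_rdistrib matrix_scalar_ac
        scalar_matrix_assoc[symmetric] K3 K3' K4 matrix_mul_neg_right algebra_simps)
qed

lemma matrix_mul_skew_poly:
  assumes "K ** (K ** K) = - K"
  shows "K ** skew_poly K p0 p1 p2 = skew_poly K 0 (p0 - p2) p1"
  using skew_poly_mult[OF assms, of 0 1 0] by (simp add: skew_poly_def)

lemma scaleR_skew_poly: "c *\<^sub>R skew_poly K p0 p1 p2 = skew_poly K (c * p0) (c * p1) (c * p2)"
  by (simp add: skew_poly_def scaleR_add_right)

lemma sums_skew_poly:
  assumes "a sums A" "b sums B" "c sums C"
  shows "(\<lambda>n. skew_poly K (a n) (b n) (c n)) sums skew_poly K A B C"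
  unfolding skew_poly_def by (intro sums_add sums_scaleR_left assms)

lemma skew_poly_inverse:
  assumes K3: "K ** (K ** K) = - K" and nonzero: "(1 - y)^2 + x^2 \<noteq> 0"
  defines "P \<equiv> skew_poly K 1 (- x / ((1 - y)^2 + x^2)) ((x^2 - (1 - y) * y) / ((1 - y)^2 + x^2))"
  shows "skew_poly K 1 x y ** P = mat 1" and "P ** skew_poly K 1 x y = mat 1"
proof -
  define D where "D = (1 - y)^2 + x^2"
  have D0: "D \<noteq> 0"
    using nonzero by (simp add: D_def)
  have c1: "- x / D + x - x * ((x^2 - (1 - y) * y) / D) + y * x / D = 0"
    using D0 by (simp add: field_simps) (simp add: D_def power2_eq_square algebra_simps)
  have c2: "(x^2 - (1 - y) * y) / D + y - x * x / D - y * ((x^2 - (1 - y) * y) / D) = 0"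
    using D0 by (simp add: field_simps) (simp add: D_def power2_eq_square algebra_simps)
  have "skew_poly K 1 x y ** P = skew_poly K 1 0 0" "P ** skew_poly K 1 x y = skew_poly K 1 0 0"
    unfolding P_def skew_poly_mult[OF K3] D_def[symmetric] using c1 c2 by (simp_all add: algebra_simps)
  then show "skew_poly K 1 x y ** P = mat 1" "P ** skew_poly K 1 x y = mat 1"
    by (simp_all add: skew_poly_def)
qed

lemma skew_scaleR: "skew (c *\<^sub>R u) = c *\<^sub>R skew u"
  by (simp add: skew_def vec_eq_iff forall_3 vector_3)

lemma mpow_scaleR: "mpow (c *\<^sub>R A) n = c ^ n *\<^sub>R mpow A n"
  by (induction n) (auto simp: matrix_scalar_ac scalar_matrix_assoc[symmetric])

lemma skew_cube:
  assumes "norm u = 1"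
  shows "skew u ** (skew u ** skew u) = - skew u"
proof -
  have "u$1 * u$1 + u$2 * u$2 + u$3 * u$3 = 1"
    using assms by (simp add: norm_eq_1 inner_vec_def sum_3)
  then show ?thesis
    by (simp add: skew_def vec_eq_iff forall_3 vector_3 matrix_matrix_mult_def sum_3) algebra
qed

lemma mpow_skew_poly:
  assumes K3: "K ** (K ** K) = - K"
  shows "mpow K n = skew_poly K (if n = 0 then 1 else 0) (if odd n then (-1) ^ (n div 2) else 0)
                      (if even n \<and> n \<noteq> 0 then - ((-1) ^ (n div 2)) else 0)"
proof (induction n)
  case 0
  then show ?case by (simp add: skew_poly_def)
next
  case (Suc n)
  then show ?case
    by (cases "n = 0") (auto simp: matrix_mul_skew_poly[OF K3] elim: oddE)
qed

definition Gamma_K_coeff :: "nat \<Rightarrow> nat \<Rightarrow> real" where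
  "Gamma_K_coeff m n = (if odd n then (-1) ^ (n div 2) else 0) / fact (m + n)"

definition Gamma_KK_coeff :: "nat \<Rightarrow> nat \<Rightarrow> real" where
  "Gamma_KK_coeff m n = (if even n \<and> n \<noteq> 0 then - ((-1) ^ (n div 2)) else 0) / fact (m + n)"

definition Gamma_K :: "nat \<Rightarrow> real \<Rightarrow> real" where
  "Gamma_K m b = (\<Sum>n. Gamma_K_coeff m n * b ^ n)"

definition Gamma_KK :: "nat \<Rightarrow> real \<Rightarrow> real" where
  "Gamma_KK m b = (\<Sum>n. Gamma_KK_coeff m n * b ^ n)"

lemma summable_bounded_by_exp_coeffs:
  fixes c :: "nat \<Rightarrow> real"
  assumes "\<And>n. \<bar>c n\<bar> \<le> 1 / fact n"
  shows "summable (\<lambda>n. c n * b ^ n)"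
proof (rule summable_comparison_test)
  show "summable (\<lambda>n. \<bar>b\<bar> ^ n / fact n)"
    using summable_exp[of "\<bar>b\<bar>"] by (simp add: divide_inverse mult.commute)
  have "norm (c n * b ^ n) \<le> \<bar>b\<bar> ^ n / fact n" for n
    using mult_right_mono[OF assms, of "\<bar>b\<bar> ^ n" n] by (simp add: abs_mult power_abs)
  then show "\<exists>N. \<forall>n\<ge>N. norm (c n * b ^ n) \<le> \<bar>b\<bar> ^ n / fact n"
    by blast
qed

lemma abs_Gamma_K_coeff_le: "\<bar>Gamma_K_coeff m n\<bar> \<le> 1 / fact n"
  and abs_Gamma_KK_coeff_le: "\<bar>Gamma_KK_coeff m n\<bar> \<le> 1 / fact n"
  by (simp_all add: Gamma_K_coeff_def Gamma_KK_coeff_def fact_mono frac_le)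

lemmas summable_Gamma_K = summable_bounded_by_exp_coeffs[OF abs_Gamma_K_coeff_le]

lemmas summable_Gamma_KK = summable_bounded_by_exp_coeffs[OF abs_Gamma_KK_coeff_le]

lemma Gamma_axis:
  assumes "norm u = 1"
  shows "Gamma m (b *\<^sub>R u) = skew_poly (skew u) (1 / fact m) (Gamma_K m b) (Gamma_KK m b)"
proof -
  have series_term: "(1 / fact (m + n)) *\<^sub>R mpow (skew (b *\<^sub>R u)) n =
      skew_poly (skew u) (if n = 0 then 1 / fact m else 0) (Gamma_K_coeff m n * b ^ n) (Gamma_KK_coeff m n * b ^ n)"
    for n
    by (simp add: skew_scaleR mpow_scaleR mpow_skew_poly[OF skew_cube[OF assms]] scaleR_skew_poly
        Gamma_K_coeff_def Gamma_KK_coeff_def mult.commute)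
  have "(\<lambda>n. skew_poly (skew u) (if n = 0 then 1 / fact m else 0) (Gamma_K_coeff m n * b ^ n) (Gamma_KK_coeff m n * b ^ n))
      sums skew_poly (skew u) (1 / fact m) (Gamma_K m b) (Gamma_KK m b)"
    unfolding Gamma_K_def Gamma_KK_def
    by (intro sums_skew_poly summable_sums summable_Gamma_K summable_Gamma_KK)
       (use sums_single[of 0 "\<lambda>_. 1 / fact m :: real"] in simp)
  then show ?thesis
    unfolding Gamma_def series_term by (rule sums_unique[symmetric])
qed

lemma Gamma_K_0: "Gamma_K 0 = sin"
proof
  fix b
  have "Gamma_K_coeff 0 = sin_coeff"
    by (auto simp: Gamma_K_coeff_def sin_coeff_def fun_eq_iff elim: oddE)
  then show "Gamma_K 0 b = sin b"
    using sin_converges[of b] by (simp add: Gamma_K_def sums_iff)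
qed

lemma Gamma_KK_0: "Gamma_KK 0 b = 1 - cos b"
proof -
  have "Gamma_KK_coeff 0 n * b ^ n = (if n = 0 then 1 else 0) - cos_coeff n * b ^ n" for n
    by (auto simp: Gamma_KK_coeff_def cos_coeff_def)
  moreover have "(\<lambda>n. (if n = 0 then 1 else 0) - cos_coeff n * b ^ n) sums (1 - cos b)"
    using sums_diff[OF sums_single[of 0 "\<lambda>_. 1::real"] cos_converges[of b]] by simp
  ultimately show ?thesis
    by (simp add: Gamma_KK_def sums_iff)
qed

lemma Gamma_K_zero [simp]: "Gamma_K m 0 = 0"
  and Gamma_KK_zero [simp]: "Gamma_KK m 0 = 0"
  by (simp_all add: Gamma_K_def Gamma_KK_def powser_zero) (simp_all add: Gamma_K_coeff_def Gamma_KK_coeff_def)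

lemma isCont_Gamma_K: "isCont (Gamma_K m) b"
  and isCont_Gamma_KK: "isCont (Gamma_KK m) b"
  unfolding Gamma_K_def Gamma_KK_def
  by (rule isCont_powser[where K="\<bar>b\<bar> + 1"]; simp add: summable_Gamma_K summable_Gamma_KK)+

lemma axis_angle:
  obtains b and u :: "real^3" where "norm u = 1" "\<theta> = b *\<^sub>R u"
proof (cases "\<theta> = 0")
  case True
  obtain u :: "real^3" where "norm u = 1"
    using vector_choose_size[of 1] by auto
  with True show ?thesis
    using that[of u 0] by simp
next
  case False
  then show ?thesis
    using that[of "sgn \<theta>" "norm \<theta>"] by (simp add: norm_sgn sgn_div_norm)
qed

lemma Gamma0_axis:
  assumes "norm u = 1"
  shows "Gamma 0 (b *\<^sub>R u) = skew_poly (skew u) 1 (sin b) (1 - cos b)"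
  using Gamma_axis[OF assms, of 0 b] by (simp add: Gamma_K_0 Gamma_KK_0)

lemma Gamma_zero: "Gamma m 0 = (1 / fact m) *\<^sub>R mat 1"
proof -
  obtain u :: "real^3" where "norm u = 1"
    using vector_choose_size[of 1] by auto
  then show ?thesis
    using Gamma_axis[of u m 0] by (simp add: skew_poly_def)
qed

lemma matrix_inv_Gamma0: "matrix_inv (Gamma 0 \<theta>) = Gamma 0 (- \<theta>)"
proof -
  obtain b u where u: "norm u = 1" and \<theta>: "\<theta> = b *\<^sub>R u"
    by (rule axis_angle)
  have neg: "- \<theta> = (- b) *\<^sub>R u"
    by (simp add: \<theta>)
  have "sin b ^ 2 + cos b ^ 2 = 1"
    by simp
  then have "Gamma 0 \<theta> ** Gamma 0 (- \<theta>) = skew_poly (skew u) 1 0 0"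
    and "Gamma 0 (- \<theta>) ** Gamma 0 \<theta> = skew_poly (skew u) 1 0 0"
    unfolding neg unfolding \<theta> Gamma0_axis[OF u] skew_poly_mult[OF skew_cube[OF u]]
    by (simp_all add: power2_eq_square algebra_simps)
  then show ?thesis
    by (intro matrix_inv_unique) (simp_all add: skew_poly_def)
qed

lemma Gamma1_axis_local_inverse:
  assumes u: "norm u = 1"
  obtains P where "isCont P 0"
    and "\<forall>\<^sub>F b in nhds 0. Gamma 1 (b *\<^sub>R u) ** P b = mat 1 \<and> P b ** Gamma 1 (b *\<^sub>R u) = mat 1"
proof -
  define x where "x = Gamma_K 1"
  define y where "y = Gamma_KK 1"
  define D where "D b = (1 - y b)^2 + x b ^ 2" for b
  define P where "P b = skew_poly (skew u) 1 (- x b / D b) ((x b ^ 2 - (1 - y b) * y b) / D b)" for b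
  have cont_x: "isCont x b" and cont_y: "isCont y b" for b
    unfolding x_def y_def by (rule isCont_Gamma_K isCont_Gamma_KK)+
  have cont_D: "isCont D b" for b
    unfolding D_def by (intro continuous_intros cont_x cont_y)
  have "open {b. D b \<noteq> 0}"
    by (intro open_Collect_neq continuous_intros continuous_at_imp_continuous_on ballI cont_D)
  moreover have "D 0 = 1"
    by (simp add: D_def x_def y_def)
  ultimately have "\<forall>\<^sub>F b in nhds 0. D b \<noteq> 0"
    using eventually_nhds_in_open[of "{b. D b \<noteq> 0}" 0] by simp
  then have "\<forall>\<^sub>F b in nhds 0. Gamma 1 (b *\<^sub>R u) ** P b = mat 1 \<and> P b ** Gamma 1 (b *\<^sub>R u) = mat 1"
  proof eventually_elim
    case (elim b)
    have "Gamma 1 (b *\<^sub>R u) = skew_poly (skew u) 1 (x b) (y b)"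
      using Gamma_axis[OF u, of 1 b] by (simp add: x_def y_def)
    then show ?case
      using skew_poly_inverse[OF skew_cube[OF u] elim[unfolded D_def]] by (simp only: P_def D_def)
  qed
  moreover have "isCont P 0"
    unfolding P_def skew_poly_def using \<open>D 0 = 1\<close>
    by (intro continuous_intros cont_x cont_y cont_D) simp_all
  ultimately show ?thesis
    using that by blast
qed

lemma isCont_matrix_inv_Gamma1_axis:
  assumes "norm u = 1"
  shows "isCont (\<lambda>b. matrix_inv (Gamma 1 (b *\<^sub>R u))) 0"
proof -
  obtain P where "isCont P 0"
    and "\<forall>\<^sub>F b in nhds 0. Gamma 1 (b *\<^sub>R u) ** P b = mat 1 \<and> P b ** Gamma 1 (b *\<^sub>R u) = mat 1"
    using Gamma1_axis_local_inverse[OF assms] .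
  then have "\<forall>\<^sub>F b in nhds 0. matrix_inv (Gamma 1 (b *\<^sub>R u)) = P b"
    by (auto elim: eventually_mono intro: matrix_inv_unique)
  then show ?thesis
    using isCont_cong \<open>isCont P 0\<close> by fast
qed

lemma eventually_Gamma1_axis_matrix_inv:
  assumes "norm u = 1"
  shows "\<forall>\<^sub>F b in nhds 0. Gamma 1 (b *\<^sub>R u) ** matrix_inv (Gamma 1 (b *\<^sub>R u)) = mat 1"
proof -
  obtain P where "\<forall>\<^sub>F b in nhds 0. Gamma 1 (b *\<^sub>R u) ** P b = mat 1 \<and> P b ** Gamma 1 (b *\<^sub>R u) = mat 1"
    using Gamma1_axis_local_inverse[OF assms] .
  then show ?thesis
    by (auto elim: eventually_mono simp: matrix_inv_unique)
qed

(* Where Gamma_1(theta) is singular (|a| a nonzero multiple of 2 pi) matrix_inv is junk; only a near 0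
   matters. *)
definition act_error :: "real^3 \<Rightarrow> real \<times> (real^3) \<Rightarrow> ('m::finite, 'f::finite) ingvio_err" where
  "act_error g h =
     (let \<theta> = (- fst h) *\<^sub>R sgn g;
          \<delta>p = - ((matrix_inv (Gamma 1 \<theta>) ** Gamma 0 \<theta>) *v snd h)
      in (\<theta>, \<delta>p, 0, 0, 0, 0, 0, vec \<theta>, vec \<delta>p, vec \<delta>p, 0, 0))"

lemma act_eq_boxplus_act_error:
  assumes "Gamma 1 ((- fst h) *\<^sub>R sgn g) ** matrix_inv (Gamma 1 ((- fst h) *\<^sub>R sgn g)) = mat 1"
  shows "act g h x = boxplus anchor x (act_error g h)"
proof -
  obtain a p where h: "h = (a, p)"
    by fastforce
  define \<theta> where "\<theta> = - (a *\<^sub>R sgn g)"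
  have rot: "matrix_inv (rotS g a) = Gamma 0 \<theta>"
    by (simp add: rotS_def matrix_inv_Gamma0 \<theta>_def sgn_div_norm divide_inverse)
  have trans: "Gamma 1 \<theta> *v - ((matrix_inv (Gamma 1 \<theta>) ** Gamma 0 \<theta>) *v p) = - (Gamma 0 \<theta> *v p)"
  proof -
    have "Gamma 1 \<theta> *v - ((matrix_inv (Gamma 1 \<theta>) ** Gamma 0 \<theta>) *v p)
        = - (((Gamma 1 \<theta> ** matrix_inv (Gamma 1 \<theta>)) ** Gamma 0 \<theta>) *v p)"
      by (simp add: linear_neg[OF matrix_vector_mul_linear] matrix_vector_mul_assoc matrix_mul_assoc)
    then show ?thesis
      using assms by (simp add: h \<theta>_def)
  qed
  show ?thesis
    by (cases x) (simp add: act_def boxplus_def act_error_def h Let_def rot trans[simplified] Gamma_zero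
        matrix_vector_mult_diff_distrib flip: \<theta>_def)
qed

lemma eventually_act_eq_boxplus_act_error:
  assumes "g \<noteq> 0"
  shows "\<forall>\<^sub>F h in nhds (0, 0). act g h x = boxplus anchor x (act_error g h)"
proof -
  have u: "norm (sgn g) = 1"
    using assms by (simp add: norm_sgn)
  have "((\<lambda>h::real \<times> (real^3). - fst h) \<longlongrightarrow> 0) (nhds (0, 0))"
    using tendsto_minus[OF tendsto_fst[OF filterlim_ident, of "(0::real, 0::real^3)"]] by simp
  from eventually_compose_filterlim[OF eventually_Gamma1_axis_matrix_inv[OF u] this]
  have "\<forall>\<^sub>F h in nhds (0::real, 0::real^3).
      Gamma 1 ((- fst h) *\<^sub>R sgn g) ** matrix_inv (Gamma 1 ((- fst h) *\<^sub>R sgn g)) = mat 1"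
    by simp
  then show ?thesis
    by (rule eventually_mono) (rule act_eq_boxplus_act_error)
qed

lemma act_error_zero: "act_error g (0, 0) = 0"
  by (simp add: act_error_def zero_prod_def)

lemma act_error_has_derivative:
  assumes "g \<noteq> 0"
  shows "(act_error g has_derivative (\<lambda>h. ((- fst h) *\<^sub>R sgn g, - snd h, 0, 0, 0, 0, 0,
            vec ((- fst h) *\<^sub>R sgn g), vec (- snd h), vec (- snd h), 0, 0))) (at (0, 0))"
proof -
  define E where "E a = matrix_inv (Gamma 1 ((- a) *\<^sub>R sgn g)) ** Gamma 0 ((- a) *\<^sub>R sgn g)" for a
  have u: "norm (sgn g) = 1"
    using assms by (simp add: norm_sgn)
  have cont_inv: "isCont (\<lambda>b. matrix_inv (Gamma 1 (b *\<^sub>R sgn g))) (- 0)"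
    using isCont_matrix_inv_Gamma1_axis[OF u] by simp
  have "isCont E 0"
    unfolding E_def Gamma0_axis[OF u] skew_poly_def
    by (intro bounded_bilinear.isCont[OF bounded_bilinear_matrix_matrix_mult] continuous_intros
        isCont_o2[OF isCont_minus[OF continuous_ident] cont_inv])
  moreover have "E 0 = mat 1"
    using matrix_inv_unique[of "mat 1" "mat 1"] by (simp add: E_def Gamma_zero)
  ultimately have "((\<lambda>h. E (fst h) *v snd h) has_derivative snd) (at (0, 0))"
    using bounded_bilinear.has_derivative_isCont_left_factor[OF bounded_bilinear_matrix_vector_mult,
        where E = E and c = 0]
    by simp
  then show ?thesis
    unfolding act_error_def Let_def E_def[symmetric]
    by (intro has_derivative_Pair has_derivative_const has_derivative_minus has_derivative_scaleR_left
        has_derivative_fst has_derivative_ident bounded_linear.has_derivative[OF bounded_linear_vec])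
qed

theorem proposition3:
  fixes anchor :: "'f::finite \<Rightarrow> 'm::finite"
    and boxminus :: "('m, 'f) ingvio_state \<Rightarrow> ('m, 'f) ingvio_state \<Rightarrow> ('m, 'f) ingvio_err"
    and g :: "real^3" and nsat :: "nat \<Rightarrow> real^3" and N :: nat and Recef :: "real^3^3"
  assumes g_nz: "g \<noteq> 0"
    and unit_n: "\<forall>j\<in>{1..N}. norm (nsat j) = 1"
    and Recef_rot: "is_rot Recef"
    and inverse: "\<exists>e>0. \<forall>xh d. valid_state xh \<and> norm d < e \<longrightarrow>
                      boxminus (boxplus anchor xh d) xh = d"
  shows "(\<exists>D. \<forall>x. valid_state x \<longrightarrow>
            ((\<lambda>h. boxminus (act g h x) x) has_derivative D)
              (at (0, 0) within (UNIV \<times> nullNg nsat N Recef)))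
       \<and> (\<exists>D. \<forall>x. valid_state x \<longrightarrow>
            ((\<lambda>t. boxminus (act g (0, t) x) x) has_derivative D)
              (at 0 within nullNg nsat N Recef))"
proof -
  obtain e where "0 < e"
    and inverse: "\<And>x \<delta>. valid_state x \<Longrightarrow> norm \<delta> < e \<Longrightarrow> boxminus (boxplus anchor x \<delta>) x = \<delta>"
    using inverse by blast
  define D :: "real \<times> (real^3) \<Rightarrow> ('m, 'f) ingvio_err" where
    "D h = ((- fst h) *\<^sub>R sgn g, - snd h, 0, 0, 0, 0, 0,
            vec ((- fst h) *\<^sub>R sgn g), vec (- snd h), vec (- snd h), 0, 0)" for h
  have at_identity: "((\<lambda>h. boxminus (act g h x) x) has_derivative D) (at (0, 0))" if "valid_state x" for x
    unfolding D_def[abs_def]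
  proof (rule has_derivative_through_local_inverse[where minus_map = "\<lambda>y. boxminus y x" and d = "act_error g"])
    show "\<And>\<delta>. norm \<delta> < e \<Longrightarrow> boxminus (boxplus anchor x \<delta>) x = \<delta>"
      using inverse[OF that] .
  qed (use \<open>0 < e\<close> act_error_has_derivative[OF g_nz] act_error_zero
        eventually_act_eq_boxplus_act_error[OF g_nz] in auto)
  have pure_translation: "((\<lambda>t. (0, t)) has_derivative (\<lambda>t. (0, t))) (at 0 within nullNg nsat N Recef)"
    by (intro has_derivative_Pair has_derivative_const has_derivative_ident)
  show ?thesis
  proof (intro conjI exI allI impI)
    fix x :: "('m, 'f) ingvio_state"
    assume "valid_state x"
    then have at_x: "((\<lambda>h. boxminus (act g h x) x) has_derivative D) (at (0, 0))"
      by (rule at_identity)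
    then show "((\<lambda>h. boxminus (act g h x) x) has_derivative D) (at (0, 0) within UNIV \<times> nullNg nsat N Recef)"
      by (rule has_derivative_at_withinI)
    show "((\<lambda>t. boxminus (act g (0, t) x) x) has_derivative (\<lambda>t. D (0, t))) (at 0 within nullNg nsat N Recef)"
      using has_derivative_compose[OF pure_translation at_x] .
  qed
qed

end
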